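(* Assume: (H1) there exist real numbers $M_1<M_2$ such that for every $u\in C^1$: $\int_0^T f(t,u(t),u'(t))\,dt\neq0$ whenever $\min_{[0,T]}u'\ge M_2$, and $\int_0^T f(t,u(t),u'(t))\,dt\neq0$ whenever $\max_{[0,T]}u'\le M_1$; (H2) there exists $c\in C$ such that $f(t,x,y)\ge c(t)$ for all $(t,x,y)\in[0,T]\times\mathbb{R}\times\mathbb{R}$, and $L+2\|c^-\|_{L^1}<a$, where $L=\max\{|\varphi(M_2)|,|\varphi(M_1)|\}$. Let $r=\max\{|\varphi^{-1}(L+2\|c^-\|_{L^1})|,\ |\varphi^{-1}(-L-2\|c^-\|_{L^1})|\}$. If $(\lambda,u)\in\Omega$ satisfies $u=M(\lambda,u)$, then $$\|\lambda H(N_f(u)-Q(N_f(u)))+\varphi(P(u))\|_\infty<L+2\|c^-\|_{L^1}\quad\text{and}\quad \|u\|_1<r(2+T).$$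
   Context: Let $T>0$, $a>0$, let $\varphi:\mathbb{R}\to(-a,a)$ be a homeomorphism with $\varphi(0)=0$, and let $f:[0,T]\times\mathbb{R}\times\mathbb{R}\to\mathbb{R}$ be continuous. $C=C([0,T],\mathbb{R})$ carries the sup norm $\|\cdot\|_\infty$; $C^1=C^1([0,T],\mathbb{R})$ carries the norm $\|u\|_1=\|u\|_\infty+\|u'\|_\infty$; $\|\cdot\|_{L^1}$ is the norm of $L^1([0,T])$, and $c^-=\max\{-c,0\}$. Define $N_f:C^1\to C$, $N_f(u)(t)=f(t,u(t),u'(t))$; $H:C\to C^1$, $H(v)(t)=\int_0^t v(s)\,ds$; $Q:C\to C$, $Q(v)(t)=\frac1T\int_0^T v(s)\,ds$ (a constant function); $P:C\to C$, $P(u)(t)=u(0)$ (a constant function). For $v\in C$ with $\|v\|_\infty<a$, $\varphi^{-1}(v)\in C$ denotes $t\mapsto\varphi^{-1}(v(t))$, and $\varphi(v)$ is defined pointwise similarly. Let $$\Omega=\{(\lambda,u)\in[0,1]\times C^1:\ \|\lambda H(N_f(u)-Q(N_f(u)))+\varphi(P(u))\|_\infty<a\},$$ and for $(\lambda,u)\in\Omega$ let $$M(\lambda,u)=P(u)+Q(N_f(u))+H\big(\varphi^{-1}[\lambda H(N_f(u)-Q(N_f(u)))+\varphi(P(u))]\big).$$ *)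

theory Defs
  imports "HOL-Analysis.Analysis"
begin

text \<open>Functions in C([0,T]) / C^1([0,T]) are represented as real functions;
 only their values on {0..T} matter. A C^1 function u is given together with
 its derivative u' (one-sided at the endpoints).\<close>

definition is_C1 :: "real \<Rightarrow> (real \<Rightarrow> real) \<Rightarrow> (real \<Rightarrow> real) \<Rightarrow> bool" where
  "is_C1 T u u' \<longleftrightarrow> (\<forall>t\<in>{0..T}. (u has_real_derivative u' t) (at t within {0..T}))
      \<and> continuous_on {0..T} u'"

definition supn :: "real \<Rightarrow> (real \<Rightarrow> real) \<Rightarrow> real" where
  "supn T v = (SUP t\<in>{0..T}. \<bar>v t\<bar>)"

definition Nf :: "(real \<Rightarrow> real \<Rightarrow> real \<Rightarrow> real) \<Rightarrow> (real \<Rightarrow> real) \<Rightarrow> (real \<Rightarrow> real) \<Rightarrow> real \<Rightarrow> real" where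
  "Nf f u u' t = f t (u t) (u' t)"

definition Hop :: "(real \<Rightarrow> real) \<Rightarrow> real \<Rightarrow> real" where
  "Hop v t = integral {0..t} v"

definition Qop :: "real \<Rightarrow> (real \<Rightarrow> real) \<Rightarrow> real \<Rightarrow> real" where
  "Qop T v t = integral {0..T} v / T"

definition Pop :: "(real \<Rightarrow> real) \<Rightarrow> real \<Rightarrow> real" where
  "Pop u t = u 0"

end

theory Submission
  imports Defs
begin

text \<open>At a fixed point of M the constant term Q(N_f u) must vanish, so N_f u has zero mean, and
  differentiating u = M(\<lambda>, u) gives \<phi>(u') = \<lambda> H(N_f u) + \<phi>(u(0)), which is the function
  whose sup norm is to be estimated; in particular u'(0) = u(0). By (H1) and the intermediate
  value theorem, M1 < u'(t0) < M2 at some t0, so |\<phi>(u'(t0))| < L. A function bounded below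
  by c with zero mean has a primitive oscillating by at most 2 ||c^-||_1, which yields
  |\<phi>(u')| < L + 2 ||c^-||_1. Applying \<psi> = \<phi>^-1 bounds |u'| by r, and u = u(0) + H(u') with
  |u(0)| = |u'(0)| < r bounds |u| by r(1 + T).\<close>

lemma abs_le_supn:
  assumes "continuous_on {0..T} g" "t \<in> {0..T}"
  shows "\<bar>g t\<bar> \<le> supn T g"
proof -
  have "bounded ((\<lambda>t. \<bar>g t\<bar>) ` {0..T})"
    using assms(1) by (intro compact_imp_bounded compact_continuous_image continuous_intros) auto
  then show ?thesis
    unfolding supn_def using assms(2) by (intro cSUP_upper bounded_imp_bdd_above)
qed

lemma supn_less:
  assumes "T \<ge> 0" "continuous_on {0..T} g" "\<And>t. t \<in> {0..T} \<Longrightarrow> \<bar>g t\<bar> < B"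
  shows "supn T g < B"
proof -
  have "continuous_on {0..T} (\<lambda>t. \<bar>g t\<bar>)"
    using assms(2) by (intro continuous_intros)
  then obtain t0 where "t0 \<in> {0..T}" "\<forall>t\<in>{0..T}. \<bar>g t\<bar> \<le> \<bar>g t0\<bar>"
    using continuous_attains_sup[of "{0..T}" "\<lambda>t. \<bar>g t\<bar>"] assms(1) by auto
  then have "supn T g \<le> \<bar>g t0\<bar>"
    unfolding supn_def using assms(1) by (intro cSUP_least) auto
  with \<open>t0 \<in> {0..T}\<close> assms(3) show ?thesis by fastforce
qed

lemma homeomorphism_abs_less_max_endpoints:
  fixes \<phi> :: "real \<Rightarrow> real"
  assumes "homeomorphism S S' \<phi> \<psi>" "{p..q} \<subseteq> S" "p < x" "x < q"
  shows "\<bar>\<phi> x\<bar> < max \<bar>\<phi> p\<bar> \<bar>\<phi> q\<bar>"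
proof -
  have "continuous_on {p..q} \<phi>"
    using assms(1,2) by (meson continuous_on_subset homeomorphism_cont1)
  moreover have "inj_on \<phi> {p..q}"
    using assms(1,2) by (metis homeomorphism_apply1 inj_on_inverseI subsetD)
  ultimately have "\<phi> p < \<phi> x \<and> \<phi> x < \<phi> q \<or> \<phi> q < \<phi> x \<and> \<phi> x < \<phi> p"
    by (rule continuous_inj_imp_mono[OF assms(3,4)])
  then show ?thesis by auto
qed

lemma homeomorphism_abs_less_inverse_bound:
  fixes \<phi> \<psi> :: "real \<Rightarrow> real"
  assumes hom: "homeomorphism UNIV {-a<..<a} \<phi> \<psi>" and "B < a" and "\<bar>\<phi> y\<bar> < B"
  shows "\<bar>y\<bar> < max \<bar>\<psi> B\<bar> \<bar>\<psi> (- B)\<bar>"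
proof -
  have "{- B..B} \<subseteq> {-a<..<a}"
    using \<open>B < a\<close> by auto
  from homeomorphism_abs_less_max_endpoints[OF homeomorphism_symD[OF hom] this, of "\<phi> y"]
  show ?thesis
    using \<open>\<bar>\<phi> y\<bar> < B\<close> homeomorphism_apply1[OF hom] by (auto simp: max.commute)
qed

lemma C1_derivative_eq_integrand:
  assumes T: "T > 0" and u: "is_C1 T u u'" and g: "continuous_on {0..T} g"
    and u_eq: "\<And>t. t \<in> {0..T} \<Longrightarrow> u t = u 0 + integral {0..t} g"
    and t: "t \<in> {0..T}"
  shows "u' t = g t"
proof -
  have "(u has_real_derivative u' t) (at t within {0..T})"
    using u t unfolding is_C1_def by blast
  then have "((\<lambda>t. u 0 + integral {0..t} g) has_real_derivative u' t) (at t within {0..T})"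
    by (rule has_field_derivative_transform_within[OF _ zero_less_one t]) (erule u_eq)
  moreover have "((\<lambda>t. u 0 + integral {0..t} g) has_real_derivative g t) (at t within {0..T})"
    using DERIV_add[OF DERIV_const integral_has_real_derivative[OF g t]] by simp
  ultimately show ?thesis
    using vector_derivative_unique_within_closed_interval[OF T, of t] t
    by (metis cbox_interval has_real_derivative_iff_has_vector_derivative)
qed

lemma C1_norm_less:
  assumes "T > 0" "is_C1 T u u'" "\<bar>u 0\<bar> < r" "\<And>t. t \<in> {0..T} \<Longrightarrow> \<bar>u' t\<bar> < r"
  shows "supn T u + supn T u' < r * (2 + T)"
proof -
  have u'c: "continuous_on {0..T} u'" and uc: "continuous_on {0..T} u"
    using assms(2) by (auto simp: is_C1_def intro: DERIV_continuous_on)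
  have "\<bar>u t\<bar> < r * (1 + T)" if t: "t \<in> {0..T}" for t
  proof -
    have "(u has_real_derivative u' x) (at x within {0..t})" if "x \<in> {0..t}" for x
    proof (rule DERIV_subset)
      show "(u has_real_derivative u' x) (at x within {0..T})"
        using assms(2) that t unfolding is_C1_def by auto
    qed (use t in auto)
    then have "(u' has_integral u t - u 0) {0..t}"
      using t by (intro fundamental_theorem_of_calculus)
        (auto simp: has_real_derivative_iff_has_vector_derivative[symmetric])
    moreover have "norm (integral {0..t} u') \<le> r * (t - 0)"
      using t assms(4) by (intro integral_bound continuous_on_subset[OF u'c]) (auto intro: less_imp_le)
    ultimately have "\<bar>u t - u 0\<bar> \<le> r * t"
      by (simp add: integral_unique)
    also have "\<dots> \<le> r * T"
      using t assms(4)[of 0] assms(1) by (intro mult_left_mono) auto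
    finally show ?thesis using assms(3) by (simp add: algebra_simps)
  qed
  then have "supn T u < r * (1 + T)"
    using assms(1) uc by (intro supn_less) auto
  moreover have "supn T u' < r"
    using assms(1,4) u'c by (intro supn_less) auto
  ultimately show ?thesis by (simp add: algebra_simps)
qed

lemma continuous_on_value_between:
  fixes g :: "real \<Rightarrow> real"
  assumes g: "continuous_on {0..T} g" and "M1 < M2"
    and t1: "t1 \<in> {0..T}" "g t1 < M2" and t2: "t2 \<in> {0..T}" "M1 < g t2"
  obtains t0 where "t0 \<in> {0..T}" "M1 < g t0" "g t0 < M2"
proof -
  consider "M1 < g t1" | "g t2 < M2" | "g t1 \<le> M1" "M2 \<le> g t2" by linarith
  then show ?thesis
  proof cases
    case 3
    have "connected (g ` {0..T})"
      using g by (rule connected_continuous_image) simp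
    then have "(M1 + M2) / 2 \<in> g ` {0..T}"
      by (rule connectedD_interval[of _ "g t1" "g t2"]) (use t1 t2 3 \<open>M1 < M2\<close> in auto)
    then show ?thesis
      using that \<open>M1 < M2\<close> by auto
  qed (use that t1 t2 in auto)
qed

lemma primitive_increment_ge:
  fixes N c :: "real \<Rightarrow> real"
  assumes N: "continuous_on {0..T} N" and c: "continuous_on {0..T} c"
    and N_ge: "\<And>t. t \<in> {0..T} \<Longrightarrow> c t \<le> N t"
    and st: "0 \<le> s" "s \<le> t" "t \<le> T"
  shows "integral {0..t} N - integral {0..s} N \<ge> - integral {0..T} (\<lambda>x. max (- c x) 0)"
proof -
  have c_neg: "continuous_on {0..T} (\<lambda>x. max (- c x) 0)"
    using c by (intro continuous_intros)
  have "integral {0..t} N - integral {0..s} N = integral {s..t} N"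
  proof -
    have "N integrable_on {0..t}"
      using st by (intro integrable_continuous_real continuous_on_subset[OF N]) auto
    from Henstock_Kurzweil_Integration.integral_combine[OF st(1,2) this] show ?thesis
      by simp
  qed
  also have "\<dots> \<ge> integral {s..t} (\<lambda>x. - max (- c x) 0)"
    using st N_ge
    by (intro integral_le integrable_neg integrable_continuous_real
          continuous_on_subset[OF c_neg] continuous_on_subset[OF N])
       (auto intro: order.trans[OF _ N_ge])
  moreover have "integral {s..t} (\<lambda>x. max (- c x) 0) \<le> integral {0..T} (\<lambda>x. max (- c x) 0)"
    using st by (intro integral_subset_le integrable_continuous_real continuous_on_subset[OF c_neg]) auto
  ultimately show ?thesis
    by (simp add: integral_neg)
qed

lemma primitive_oscillation_le:
  fixes N c :: "real \<Rightarrow> real"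
  assumes N: "continuous_on {0..T} N" and c: "continuous_on {0..T} c"
    and N_ge: "\<And>t. t \<in> {0..T} \<Longrightarrow> c t \<le> N t"
    and N_int: "integral {0..T} N = 0"
    and s: "s \<in> {0..T}" and t: "t \<in> {0..T}"
  shows "\<bar>integral {0..t} N - integral {0..s} N\<bar> \<le> 2 * integral {0..T} (\<lambda>x. max (- c x) 0)"
proof -
  note incr = primitive_increment_ge[OF N c N_ge]
  have "\<bar>integral {0..y} N - integral {0..x} N\<bar> \<le> 2 * integral {0..T} (\<lambda>x. max (- c x) 0)"
    if "0 \<le> x" "x \<le> y" "y \<le> T" for x y
    \<comment> \<open>the upper bound applies the lower bound on [y,T] and on [0,x], as the integral over [0,T] vanishes\<close>
    using incr[of x y] incr[of y T] incr[of 0 x] that N_int by auto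
  from this[of s t] this[of t s] s t show ?thesis
    by (cases "s \<le> t") (auto simp: abs_minus_commute)
qed

lemma continuous_on_Nf:
  assumes "continuous_on ({0..T} \<times> UNIV \<times> UNIV) (\<lambda>(t, x, y). f t x y)" and "is_C1 T u u'"
  shows "continuous_on {0..T} (Nf f u u')"
proof -
  have "continuous_on {0..T} (\<lambda>t. (t, u t, u' t))"
    using assms(2) unfolding is_C1_def by (auto intro!: continuous_intros DERIV_continuous_on)
  from continuous_on_compose2[OF assms(1) this] show ?thesis
    by (auto simp: Nf_def[abs_def])
qed

lemma fixed_point_solves_phi_equation:
  fixes \<phi> \<psi> N u u' :: "real \<Rightarrow> real"
  assumes T: "T > 0" and hom: "homeomorphism UNIV {-a<..<a} \<phi> \<psi>" and u: "is_C1 T u u'"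
    and N: "continuous_on {0..T} N"
    and Omega: "supn T (\<lambda>t. lam * Hop (\<lambda>s. N s - Qop T N s) t + \<phi> (Pop u t)) < a"
    and fixpt: "\<forall>t\<in>{0..T}. u t = Pop u t + Qop T N t
                  + Hop (\<lambda>s. \<psi> (lam * Hop (\<lambda>\<tau>. N \<tau> - Qop T N \<tau>) s + \<phi> (Pop u s))) t"
  shows "integral {0..T} N = 0"
    and "\<And>t. t \<in> {0..T} \<Longrightarrow> \<phi> (u' t) = lam * integral {0..t} N + \<phi> (u 0)"
    and "u' 0 = u 0"
    and "supn T (\<lambda>t. lam * Hop (\<lambda>s. N s - Qop T N s) t + \<phi> (Pop u t)) = supn T (\<lambda>t. \<phi> (u' t))"
proof -
  have "integral {0..T} N / T = 0"
    using fixpt[rule_format, of 0] T by (simp add: Hop_def Qop_def Pop_def)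
  then show N_int: "integral {0..T} N = 0"
    using T by simp
  define w where "w t = lam * integral {0..t} N + \<phi> (u 0)" for t
  have Omega_w: "(\<lambda>t. lam * Hop (\<lambda>s. N s - Qop T N s) t + \<phi> (Pop u t)) = w"
    by (simp add: fun_eq_iff w_def Hop_def Qop_def Pop_def N_int)
  have w: "continuous_on {0..T} w"
    unfolding w_def using N
    by (intro continuous_intros indefinite_integral_continuous_1 integrable_continuous_real)
  have w_range: "w t \<in> {-a<..<a}" if "t \<in> {0..T}" for t
    using abs_le_supn[OF w that] Omega Omega_w by auto
  have "continuous_on {0..T} (\<lambda>t. \<psi> (w t))"
    by (rule continuous_on_compose2[OF homeomorphism_cont2[OF hom] w]) (use w_range in blast)
  moreover note fixpt[unfolded Hop_def Qop_def Pop_def N_int, simplified, folded w_def]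
  ultimately have "u' t = \<psi> (w t)" if "t \<in> {0..T}" for t
    using C1_derivative_eq_integrand[OF T u, of "\<lambda>t. \<psi> (w t)"] that by blast
  then show phi_u': "\<phi> (u' t) = w t" if "t \<in> {0..T}" for t
    using homeomorphism_apply2[OF hom w_range[OF that]] that by simp
  have "\<phi> (u' 0) = \<phi> (u 0)"
    using phi_u'[of 0] T by (simp add: w_def)
  then show "u' 0 = u 0"
    using homeomorphism_apply1[OF hom] by (metis UNIV_I)
  show "supn T (\<lambda>t. lam * Hop (\<lambda>s. N s - Qop T N s) t + \<phi> (Pop u t)) = supn T (\<lambda>t. \<phi> (u' t))"
    unfolding Omega_w supn_def using phi_u' by (intro SUP_cong) auto
qed

lemma abs_phi_derivative_less:
  fixes \<phi> \<psi> N c u' :: "real \<Rightarrow> real"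
  assumes hom: "homeomorphism UNIV S \<phi> \<psi>"
    and N: "continuous_on {0..T} N" and c: "continuous_on {0..T} c"
    and N_ge: "\<And>t. t \<in> {0..T} \<Longrightarrow> c t \<le> N t" and N_int: "integral {0..T} N = 0"
    and lam: "lam \<in> {0..1}"
    and phi_u': "\<And>t. t \<in> {0..T} \<Longrightarrow> \<phi> (u' t) = lam * integral {0..t} N + k"
    and t0: "t0 \<in> {0..T}" "M1 < u' t0" "u' t0 < M2"
    and t: "t \<in> {0..T}"
  shows "\<bar>\<phi> (u' t)\<bar> < max \<bar>\<phi> M2\<bar> \<bar>\<phi> M1\<bar> + 2 * integral {0..T} (\<lambda>t. max (- c t) 0)"
proof -
  have "\<bar>\<phi> (u' t0)\<bar> < max \<bar>\<phi> M2\<bar> \<bar>\<phi> M1\<bar>"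
    using homeomorphism_abs_less_max_endpoints[OF hom _ t0(2,3)] by (auto simp: max.commute)
  moreover have "\<bar>\<phi> (u' t) - \<phi> (u' t0)\<bar> = lam * \<bar>integral {0..t} N - integral {0..t0} N\<bar>"
    using lam by (simp add: phi_u'[OF t] phi_u'[OF t0(1)] abs_mult flip: right_diff_distrib)
  moreover have "\<dots> \<le> \<bar>integral {0..t} N - integral {0..t0} N\<bar>"
    using lam by (intro mult_left_le_one_le) auto
  moreover have "\<dots> \<le> 2 * integral {0..T} (\<lambda>t. max (- c t) 0)"
    by (rule primitive_oscillation_le[OF N c N_ge N_int t0(1) t])
  ultimately show ?thesis
    by linarith
qed

theorem lemma3p2:
  fixes T a M1 M2 lam :: real
    and \<phi> \<psi> :: "real \<Rightarrow> real"
    and f :: "real \<Rightarrow> real \<Rightarrow> real \<Rightarrow> real"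
    and c u u' :: "real \<Rightarrow> real"
  assumes T: "T > 0" and a: "a > 0"
    and hom: "homeomorphism UNIV {-a<..<a} \<phi> \<psi>" and phi0: "\<phi> 0 = 0"
    and fcont: "continuous_on ({0..T} \<times> UNIV \<times> UNIV) (\<lambda>(t, x, y). f t x y)"
    and H1_M: "M1 < M2"
    and H1_up: "\<And>v v'. is_C1 T v v' \<Longrightarrow> (\<forall>t\<in>{0..T}. v' t \<ge> M2) \<Longrightarrow>
                   integral {0..T} (\<lambda>t. f t (v t) (v' t)) \<noteq> 0"
    and H1_low: "\<And>v v'. is_C1 T v v' \<Longrightarrow> (\<forall>t\<in>{0..T}. v' t \<le> M1) \<Longrightarrow>
                   integral {0..T} (\<lambda>t. f t (v t) (v' t)) \<noteq> 0"
    and H2_c: "continuous_on {0..T} c"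
    and H2_f: "\<And>t x y. t \<in> {0..T} \<Longrightarrow> f t x y \<ge> c t"
    and H2_a: "max \<bar>\<phi> M2\<bar> \<bar>\<phi> M1\<bar> + 2 * integral {0..T} (\<lambda>t. max (- c t) 0) < a"
    and lam: "lam \<in> {0..1}"
    and u: "is_C1 T u u'"
    and Omega: "supn T (\<lambda>t. lam * Hop (\<lambda>s. Nf f u u' s - Qop T (Nf f u u') s) t + \<phi> (Pop u t)) < a"
    and fixpt: "\<forall>t\<in>{0..T}. u t = Pop u t + Qop T (Nf f u u') t
                 + Hop (\<lambda>s. \<psi> (lam * Hop (\<lambda>\<tau>. Nf f u u' \<tau> - Qop T (Nf f u u') \<tau>) s + \<phi> (Pop u s))) t"
  shows "supn T (\<lambda>t. lam * Hop (\<lambda>s. Nf f u u' s - Qop T (Nf f u u') s) t + \<phi> (Pop u t))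
           < max \<bar>\<phi> M2\<bar> \<bar>\<phi> M1\<bar> + 2 * integral {0..T} (\<lambda>t. max (- c t) 0)
       \<and> supn T u + supn T u'
           < max \<bar>\<psi> (max \<bar>\<phi> M2\<bar> \<bar>\<phi> M1\<bar> + 2 * integral {0..T} (\<lambda>t. max (- c t) 0))\<bar>
                 \<bar>\<psi> (- max \<bar>\<phi> M2\<bar> \<bar>\<phi> M1\<bar> - 2 * integral {0..T} (\<lambda>t. max (- c t) 0))\<bar> * (2 + T)"
proof -
  define N where "N = Nf f u u'"
  define B where "B = max \<bar>\<phi> M2\<bar> \<bar>\<phi> M1\<bar> + 2 * integral {0..T} (\<lambda>t. max (- c t) 0)"
  have N_cont: "continuous_on {0..T} N"
    unfolding N_def using fcont u by (rule continuous_on_Nf)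
  note fixed_point = fixed_point_solves_phi_equation[OF T hom u N_cont
      Omega[folded N_def] fixpt[folded N_def]]
  have u'_cont: "continuous_on {0..T} u'"
    using u by (simp add: is_C1_def)
  obtain t1 t2 where "t1 \<in> {0..T}" "u' t1 < M2" "t2 \<in> {0..T}" "M1 < u' t2"
    using H1_up[OF u] H1_low[OF u] fixed_point(1) unfolding N_def Nf_def by force
  then obtain t0 where t0: "t0 \<in> {0..T}" "M1 < u' t0" "u' t0 < M2"
    using continuous_on_value_between[OF u'_cont H1_M] by metis
  have phi_u'_bound: "\<bar>\<phi> (u' t)\<bar> < B" if "t \<in> {0..T}" for t
    unfolding B_def
    by (rule abs_phi_derivative_less[OF hom N_cont H2_c _ fixed_point(1) lam fixed_point(2) t0 that])
       (simp add: N_def Nf_def H2_f)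
  have u'_bound: "\<bar>u' t\<bar> < max \<bar>\<psi> B\<bar> \<bar>\<psi> (- B)\<bar>" if "t \<in> {0..T}" for t
    using homeomorphism_abs_less_inverse_bound[OF hom _ phi_u'_bound[OF that]] H2_a
    by (simp add: B_def)
  have "continuous_on {0..T} (\<lambda>t. \<phi> (u' t))"
    using continuous_on_compose2[OF homeomorphism_cont1[OF hom] u'_cont] by simp
  then have "supn T (\<lambda>t. \<phi> (u' t)) < B"
    using T phi_u'_bound by (intro supn_less) auto
  moreover have "supn T u + supn T u' < max \<bar>\<psi> B\<bar> \<bar>\<psi> (- B)\<bar> * (2 + T)"
    using u'_bound[of 0] fixed_point(3) T by (intro C1_norm_less[OF T u _ u'_bound]) auto
  ultimately show ?thesis
    using fixed_point(4) unfolding N_def[symmetric] by (simp add: B_def)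
qed

end
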